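(* If $(v^*,\pi^* )$ is an SG-SP point of (OP), then $\pi^*$ is a stationary Nash equilibrium of the finite discounted stochastic game.
   Context: Setting. A finite discounted stochastic game consists of: a number of agents $N\ge 2$; a finite state space $S$; for each $x\in S$ and agent $i$ a finite nonempty action set $A^i(x)$, with $A(x)=\prod_{i=1}^N A^i(x)$ and $A^{-i}(x)=\prod_{j\neq i}A^j(x)$; transition probabilities $p(y\mid x,a)$ (a probability distribution over $y\in S$) for $x\in S$, $a\in A(x)$; real rewards $r^i(x,a)$; a discount factor $0<\beta<1$. A stationary strategy of agent $i$ is $\pi^i=(\pi^i(x,a^i))$ with $\pi^i(x,\cdot)$ a probability vector on $A^i(x)$ for each $x$; $\pi=(\pi^1,\dots,\pi^N)$, $\pi^{-i}=(\pi^j)_{j\ne i}$, $\pi(x,a)=\prod_j\pi^j(x,a^j)$, $\pi^{-i}(x,a^{-i})=\prod_{j\ne i}\pi^j(x,a^j)$, $R^i_\pi=(\sum_a\pi(x,a)r^i(x,a))_{x\in S}$, $P_\pi=(\sum_a\pi(x,a)p(y\mid x,a))_{x,y\in S}$, and $v^i_\pi=(I-\beta P_\pi)^{-1}R^i_\pi$. $\pi^*$ is a Nash equilibrium if $v^i_{\pi^*}(x)\ge v^i_{(\pi^i,\pi^{*-i})}(x)$ for all agents $i$, all stationary strategies $\pi^i$ of agent $i$ and all $x\in S$. For $v^i\in\mathbb R^S$: $Q^i_{\pi^{-i}}(x,a^i)=\sum_{a^{-i}\in A^{-i}(x)}\pi^{-i}(x,a^{-i})\big[r^i(x,(a^i,a^{-i}))+\beta\sum_{y}p(y\mid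 x,(a^i,a^{-i}))v^i(y)\big]$, and the Bellman error is $g^i_{x,a^i}(v^i,\pi^{-i})=Q^i_{\pi^{-i}}(x,a^i)-v^i(x)$. (OP): minimize $f(v,\pi)=\sum_{i=1}^N\sum_{x\in S}\big(v^i(x)-\sum_{a^i\in A^i(x)}\pi^i(x,a^i)Q^i_{\pi^{-i}}(x,a^i)\big)$ over $v=(v^1,\dots,v^N)$ and $\pi$, subject to (a) $\pi^i(x,a^i)\ge0$; (b) $\sum_{a^i\in A^i(x)}\pi^i(x,a^i)=1$; (c) $g^i_{x,a^i}(v^i,\pi^{-i})\le 0$, for all $i,x,a^i$. A point satisfying (a)–(c) is feasible. SG-SP point: a feasible point $(v^*,\pi^* )$ of (OP) such that $\pi^{*i}(x,a^i)\,g^i_{x,a^i}(v^{*i},\pi^{*-i})=0$ for every $x\in S$, every agent $i$ and every $a^i\in A^i(x)$. *)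

theory Defs
  imports "HOL-Analysis.Analysis"
begin

text \<open>Agents are 0..N-1, states are the elements of a
finite type 's (so S = UNIV), A i x is the action set of agent i in state x,
p x a y is the transition probability p(y | x, a), r i x a is the reward of agent i,
beta is the discount factor. Joint actions are functions on agents (extensional outside {..<N}).
A stationary strategy profile is pi :: nat => 's => 'a => real, pi i x ai = pi^i(x,ai).\<close>

definition joint_actions :: "nat \<Rightarrow> (nat \<Rightarrow> 's \<Rightarrow> 'a set) \<Rightarrow> 's \<Rightarrow> (nat \<Rightarrow> 'a) set" where
  "joint_actions N A x = PiE {..<N} (\<lambda>i. A i x)"

definition is_game ::
  "nat \<Rightarrow> (nat \<Rightarrow> 's::finite \<Rightarrow> 'a set) \<Rightarrow> ('s \<Rightarrow> (nat \<Rightarrow> 'a) \<Rightarrow> 's \<Rightarrow> real)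
   \<Rightarrow> real \<Rightarrow> bool" where
  "is_game N A p \<beta> \<longleftrightarrow> N \<ge> 2 \<and>
     (\<forall>i<N. \<forall>x. finite (A i x) \<and> A i x \<noteq> {}) \<and>
     (\<forall>x. \<forall>a\<in>joint_actions N A x. (\<forall>y. p x a y \<ge> 0) \<and> (\<Sum>y\<in>UNIV. p x a y) = 1) \<and>
     0 < \<beta> \<and> \<beta> < 1"

definition is_stationary_strategy :: "(nat \<Rightarrow> 's \<Rightarrow> 'a set) \<Rightarrow> nat \<Rightarrow> ('s \<Rightarrow> 'a \<Rightarrow> real) \<Rightarrow> bool" where
  "is_stationary_strategy A i \<sigma> \<longleftrightarrow>
     (\<forall>x. (\<forall>ai\<in>A i x. \<sigma> x ai \<ge> 0) \<and> (\<Sum>ai\<in>A i x. \<sigma> x ai) = 1)"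

definition is_strategy_profile :: "nat \<Rightarrow> (nat \<Rightarrow> 's \<Rightarrow> 'a set) \<Rightarrow> (nat \<Rightarrow> 's \<Rightarrow> 'a \<Rightarrow> real) \<Rightarrow> bool" where
  "is_strategy_profile N A \<pi> \<longleftrightarrow> (\<forall>i<N. is_stationary_strategy A i (\<pi> i))"

definition joint_prob :: "nat \<Rightarrow> (nat \<Rightarrow> 's \<Rightarrow> 'a \<Rightarrow> real) \<Rightarrow> 's \<Rightarrow> (nat \<Rightarrow> 'a) \<Rightarrow> real" where
  "joint_prob N \<pi> x a = (\<Prod>j<N. \<pi> j x (a j))"

definition reward_vec ::
  "nat \<Rightarrow> (nat \<Rightarrow> 's::finite \<Rightarrow> 'a set) \<Rightarrow> (nat \<Rightarrow> 's \<Rightarrow> (nat \<Rightarrow> 'a) \<Rightarrow> real)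
   \<Rightarrow> (nat \<Rightarrow> 's \<Rightarrow> 'a \<Rightarrow> real) \<Rightarrow> nat \<Rightarrow> real^'s" where
  "reward_vec N A r \<pi> i = (\<chi> x. \<Sum>a\<in>joint_actions N A x. joint_prob N \<pi> x a * r i x a)"

definition trans_mat ::
  "nat \<Rightarrow> (nat \<Rightarrow> 's::finite \<Rightarrow> 'a set) \<Rightarrow> ('s \<Rightarrow> (nat \<Rightarrow> 'a) \<Rightarrow> 's \<Rightarrow> real)
   \<Rightarrow> (nat \<Rightarrow> 's \<Rightarrow> 'a \<Rightarrow> real) \<Rightarrow> real^'s^'s" where
  "trans_mat N A p \<pi> = (\<chi> x y. \<Sum>a\<in>joint_actions N A x. joint_prob N \<pi> x a * p x a y)"

definition value_vec ::
  "nat \<Rightarrow> (nat \<Rightarrow> 's::finite \<Rightarrow> 'a set) \<Rightarrow> ('s \<Rightarrow> (nat \<Rightarrow> 'a) \<Rightarrow> 's \<Rightarrow> real)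
   \<Rightarrow> (nat \<Rightarrow> 's \<Rightarrow> (nat \<Rightarrow> 'a) \<Rightarrow> real) \<Rightarrow> real \<Rightarrow> (nat \<Rightarrow> 's \<Rightarrow> 'a \<Rightarrow> real) \<Rightarrow> nat \<Rightarrow> real^'s" where
  "value_vec N A p r \<beta> \<pi> i =
     matrix_inv (mat 1 - \<beta> *\<^sub>R trans_mat N A p \<pi>) *v reward_vec N A r \<pi> i"

definition is_Nash ::
  "nat \<Rightarrow> (nat \<Rightarrow> 's::finite \<Rightarrow> 'a set) \<Rightarrow> ('s \<Rightarrow> (nat \<Rightarrow> 'a) \<Rightarrow> 's \<Rightarrow> real)
   \<Rightarrow> (nat \<Rightarrow> 's \<Rightarrow> (nat \<Rightarrow> 'a) \<Rightarrow> real) \<Rightarrow> real \<Rightarrow> (nat \<Rightarrow> 's \<Rightarrow> 'a \<Rightarrow> real) \<Rightarrow> bool" where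
  "is_Nash N A p r \<beta> \<pi> \<longleftrightarrow> is_strategy_profile N A \<pi> \<and>
     (\<forall>i<N. \<forall>\<sigma>. is_stationary_strategy A i \<sigma> \<longrightarrow>
        (\<forall>x. value_vec N A p r \<beta> \<pi> i $ x \<ge> value_vec N A p r \<beta> (\<pi>(i := \<sigma>)) i $ x))"

text \<open>Q^i_{pi^{-i}}(x,a^i) for a given v^i; the sum over a^{-i} in A^{-i}(x) is the sum over
joint actions a with a i = ai, weighted by prod_{j ~= i} pi^j(x,a^j).\<close>
definition Q_val ::
  "nat \<Rightarrow> (nat \<Rightarrow> 's::finite \<Rightarrow> 'a set) \<Rightarrow> ('s \<Rightarrow> (nat \<Rightarrow> 'a) \<Rightarrow> 's \<Rightarrow> real)
   \<Rightarrow> (nat \<Rightarrow> 's \<Rightarrow> (nat \<Rightarrow> 'a) \<Rightarrow> real) \<Rightarrow> real \<Rightarrow> (nat \<Rightarrow> 's \<Rightarrow> 'a \<Rightarrow> real)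
   \<Rightarrow> nat \<Rightarrow> ('s \<Rightarrow> real) \<Rightarrow> 's \<Rightarrow> 'a \<Rightarrow> real" where
  "Q_val N A p r \<beta> \<pi> i vi x ai =
     (\<Sum>a\<in>{a\<in>joint_actions N A x. a i = ai}.
        (\<Prod>j\<in>{..<N} - {i}. \<pi> j x (a j)) * (r i x a + \<beta> * (\<Sum>y\<in>UNIV. p x a y * vi y)))"

definition bellman_err ::
  "nat \<Rightarrow> (nat \<Rightarrow> 's::finite \<Rightarrow> 'a set) \<Rightarrow> ('s \<Rightarrow> (nat \<Rightarrow> 'a) \<Rightarrow> 's \<Rightarrow> real)
   \<Rightarrow> (nat \<Rightarrow> 's \<Rightarrow> (nat \<Rightarrow> 'a) \<Rightarrow> real) \<Rightarrow> real \<Rightarrow> (nat \<Rightarrow> 's \<Rightarrow> 'a \<Rightarrow> real)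
   \<Rightarrow> nat \<Rightarrow> ('s \<Rightarrow> real) \<Rightarrow> 's \<Rightarrow> 'a \<Rightarrow> real" where
  "bellman_err N A p r \<beta> \<pi> i vi x ai = Q_val N A p r \<beta> \<pi> i vi x ai - vi x"

definition OP_feasible ::
  "nat \<Rightarrow> (nat \<Rightarrow> 's::finite \<Rightarrow> 'a set) \<Rightarrow> ('s \<Rightarrow> (nat \<Rightarrow> 'a) \<Rightarrow> 's \<Rightarrow> real)
   \<Rightarrow> (nat \<Rightarrow> 's \<Rightarrow> (nat \<Rightarrow> 'a) \<Rightarrow> real) \<Rightarrow> real
   \<Rightarrow> (nat \<Rightarrow> 's \<Rightarrow> real) \<Rightarrow> (nat \<Rightarrow> 's \<Rightarrow> 'a \<Rightarrow> real) \<Rightarrow> bool" where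
  "OP_feasible N A p r \<beta> v \<pi> \<longleftrightarrow> is_strategy_profile N A \<pi> \<and>
     (\<forall>i<N. \<forall>x. \<forall>ai\<in>A i x. bellman_err N A p r \<beta> \<pi> i (v i) x ai \<le> 0)"

definition SG_SP_point ::
  "nat \<Rightarrow> (nat \<Rightarrow> 's::finite \<Rightarrow> 'a set) \<Rightarrow> ('s \<Rightarrow> (nat \<Rightarrow> 'a) \<Rightarrow> 's \<Rightarrow> real)
   \<Rightarrow> (nat \<Rightarrow> 's \<Rightarrow> (nat \<Rightarrow> 'a) \<Rightarrow> real) \<Rightarrow> real
   \<Rightarrow> (nat \<Rightarrow> 's \<Rightarrow> real) \<Rightarrow> (nat \<Rightarrow> 's \<Rightarrow> 'a \<Rightarrow> real) \<Rightarrow> bool" where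
  "SG_SP_point N A p r \<beta> v \<pi> \<longleftrightarrow> OP_feasible N A p r \<beta> v \<pi> \<and>
     (\<forall>i<N. \<forall>x. \<forall>ai\<in>A i x. \<pi> i x ai * bellman_err N A p r \<beta> \<pi> i (v i) x ai = 0)"

end

theory Submission
  imports Defs
begin

text \<open>Fix an agent i and write w for v^i. Summing the Bellman errors of an SG-SP point
against a strategy of agent i gives w - beta P w - R exactly, so complementary slackness
says that w solves the policy evaluation equation of pi, i.e. w = v^i_pi, while feasibility
says that w is a supersolution of the evaluation equation of any unilateral deviation
pi(i := sigma); the Bellman errors do not depend on agent i's own strategy. Since
(I - beta P)^{-1} is monotone for a stochastic matrix P and beta < 1 (a minimum principle),
the deviation value is at most w.\<close>

definition row_stochastic :: "real^'n^'n \<Rightarrow> bool" where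
  "row_stochastic P \<longleftrightarrow> (\<forall>x y. 0 \<le> P $ x $ y) \<and> (\<forall>x. (\<Sum>y\<in>UNIV. P $ x $ y) = 1)"

lemma discounted_resolvent_apply:
  fixes P :: "real^'n^'n"
  shows "((mat 1 - \<beta> *\<^sub>R P) *v u) $ x = u $ x - \<beta> * (P *v u) $ x"
  by (simp add: matrix_vector_mult_diff_rdistrib scaleR_matrix_vector_assoc[symmetric])

lemma row_stochastic_min_principle:
  fixes P :: "real^'n::finite^'n"
  assumes P: "row_stochastic P" and \<beta>: "0 \<le> \<beta>" "\<beta> < 1"
    and nonneg: "\<And>x. 0 \<le> ((mat 1 - \<beta> *\<^sub>R P) *v u) $ x"
  shows "0 \<le> u $ x"
proof -
  define m where "m = Min (range (\<lambda>x. u $ x))"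
  have m_le: "m \<le> u $ z" for z
    unfolding m_def by (rule Min_le) auto
  have "m \<in> range (\<lambda>x. u $ x)"
    unfolding m_def by (rule Min_in) auto
  then obtain x0 where x0: "u $ x0 = m"
    by auto
  have "m = (\<Sum>y\<in>UNIV. P $ x0 $ y * m)"
    using P by (simp add: row_stochastic_def sum_distrib_right[symmetric])
  also have "\<dots> \<le> (\<Sum>y\<in>UNIV. P $ x0 $ y * u $ y)"
    using P by (intro sum_mono mult_left_mono m_le) (auto simp: row_stochastic_def)
  also have "\<dots> = (P *v u) $ x0"
    by (simp add: matrix_vector_mult_def)
  finally have "\<beta> * m \<le> \<beta> * (P *v u) $ x0"
    using \<beta> by (simp add: mult_left_mono)
  moreover have "\<beta> * (P *v u) $ x0 \<le> m"
    using nonneg[of x0] x0 by (simp add: discounted_resolvent_apply)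
  ultimately have "0 \<le> (1 - \<beta>) * m"
    by (simp add: algebra_simps)
  then have "0 \<le> m"
    using \<beta> by (simp add: zero_le_mult_iff)
  then show ?thesis
    using m_le[of x] by linarith
qed

lemma invertible_discounted_resolvent:
  fixes P :: "real^'n::finite^'n"
  assumes P: "row_stochastic P" and \<beta>: "0 \<le> \<beta>" "\<beta> < 1"
  shows "invertible (mat 1 - \<beta> *\<^sub>R P)"
  unfolding invertible_left_inverse matrix_left_invertible_ker
proof (intro allI impI)
  fix u :: "real^'n"
  assume u: "(mat 1 - \<beta> *\<^sub>R P) *v u = 0"
  then have neg_u: "(mat 1 - \<beta> *\<^sub>R P) *v (- u) = 0"
    by (simp add: vec_eq_iff matrix_vector_mult_def sum_negf)
  have "0 \<le> u $ x" "0 \<le> (- u) $ x" for x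
    by (rule row_stochastic_min_principle[OF P \<beta>], simp add: u neg_u)+
  then show "u = 0"
    by (simp add: vec_eq_iff) (meson antisym neg_le_0_iff_le)
qed

lemma matrix_inv_inverse:
  fixes M :: "'a::field^'n^'n"
  assumes "invertible M"
  shows "M ** matrix_inv M = mat 1" "matrix_inv M ** M = mat 1"
  using someI_ex[OF assms[unfolded invertible_def]] unfolding matrix_inv_def by auto

lemma discounted_value_eqI:
  fixes P :: "real^'n::finite^'n"
  assumes P: "row_stochastic P" and \<beta>: "0 \<le> \<beta>" "\<beta> < 1"
    and eq: "(mat 1 - \<beta> *\<^sub>R P) *v u = R"
  shows "matrix_inv (mat 1 - \<beta> *\<^sub>R P) *v R = u"
  using matrix_inv_inverse(2)[OF invertible_discounted_resolvent[OF P \<beta>]]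
  by (simp add: eq[symmetric] matrix_vector_mul_assoc)

lemma discounted_value_le:
  fixes P :: "real^'n::finite^'n"
  assumes P: "row_stochastic P" and \<beta>: "0 \<le> \<beta>" "\<beta> < 1"
    and super: "\<And>z. R $ z \<le> ((mat 1 - \<beta> *\<^sub>R P) *v u) $ z"
  shows "(matrix_inv (mat 1 - \<beta> *\<^sub>R P) *v R) $ x \<le> u $ x"
proof -
  define M where "M = mat 1 - \<beta> *\<^sub>R P"
  have "M *v (matrix_inv M *v R) = R"
    using matrix_inv_inverse(1)[OF invertible_discounted_resolvent[OF P \<beta>]]
    by (simp add: M_def matrix_vector_mul_assoc)
  then have "0 \<le> (M *v (u - matrix_inv M *v R)) $ z" for z
    using super[of z] by (simp add: M_def matrix_vector_mult_diff_distrib)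
  then have "0 \<le> (u - matrix_inv M *v R) $ x"
    unfolding M_def by (rule row_stochastic_min_principle[OF P \<beta>])
  then show ?thesis
    by (simp add: M_def)
qed

lemma finite_joint_actions:
  assumes "\<forall>j<N. finite (A j x)"
  shows "finite (joint_actions N A x)"
  unfolding joint_actions_def using assms by (intro finite_PiE) auto

lemma joint_prob_split:
  assumes "i < N"
  shows "joint_prob N \<rho> x a = \<rho> i x (a i) * (\<Prod>j\<in>{..<N} - {i}. \<rho> j x (a j))"
  unfolding joint_prob_def using assms by (simp add: prod.remove)

lemma trans_mat_row_stochastic:
  fixes A :: "nat \<Rightarrow> 's::finite \<Rightarrow> 'a set"
  assumes game: "is_game N A p \<beta>" and \<rho>: "is_strategy_profile N A \<rho>"
  shows "row_stochastic (trans_mat N A p \<rho>)"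
  unfolding row_stochastic_def
proof (intro conjI allI)
  fix x y
  let ?J = "joint_actions N A x"
  have fin: "\<forall>j<N. finite (A j x)"
    using game by (auto simp: is_game_def)
  have p: "\<forall>a\<in>?J. (\<forall>y. 0 \<le> p x a y) \<and> (\<Sum>y\<in>UNIV. p x a y) = 1"
    using game by (auto simp: is_game_def)
  have joint_prob_nonneg: "0 \<le> joint_prob N \<rho> x a" if "a \<in> ?J" for a
    unfolding joint_prob_def using that \<rho>
    by (intro prod_nonneg)
      (auto simp: joint_actions_def PiE_iff is_strategy_profile_def is_stationary_strategy_def)
  show "0 \<le> trans_mat N A p \<rho> $ x $ y"
    unfolding trans_mat_def using joint_prob_nonneg p by (auto intro!: sum_nonneg)
  have "(\<Sum>y\<in>UNIV. trans_mat N A p \<rho> $ x $ y) = (\<Sum>a\<in>?J. joint_prob N \<rho> x a * (\<Sum>y\<in>UNIV. p x a y))"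
    unfolding trans_mat_def by (simp add: sum_distrib_left sum.swap[where A=UNIV])
  also have "\<dots> = (\<Sum>a\<in>?J. joint_prob N \<rho> x a)"
    using p by (intro sum.cong) auto
  also have "\<dots> = (\<Prod>j<N. \<Sum>ai\<in>A j x. \<rho> j x ai)"
    unfolding joint_prob_def joint_actions_def
    by (rule prod_sum_PiE[symmetric]) (use fin in auto)
  also have "\<dots> = 1"
    using \<rho> by (intro prod.neutral) (auto simp: is_strategy_profile_def is_stationary_strategy_def)
  finally show "(\<Sum>y\<in>UNIV. trans_mat N A p \<rho> $ x $ y) = 1" .
qed

text \<open>Conditioning the expectation of r^i + beta v on agent i's own action.\<close>

lemma reward_plus_discounted_expectation:
  fixes A :: "nat \<Rightarrow> 's::finite \<Rightarrow> 'a set"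
  assumes fin: "\<forall>j<N. finite (A j x)" and i: "i < N"
  shows "reward_vec N A r \<rho> i $ x + \<beta> * (trans_mat N A p \<rho> *v (\<chi> y. vi y)) $ x
       = (\<Sum>ai\<in>A i x. \<rho> i x ai * Q_val N A p r \<beta> \<rho> i vi x ai)"
proof -
  let ?J = "joint_actions N A x"
  define F where "F a = joint_prob N \<rho> x a * (r i x a + \<beta> * (\<Sum>y\<in>UNIV. p x a y * vi y))" for a
  have "(trans_mat N A p \<rho> *v (\<chi> y. vi y)) $ x
      = (\<Sum>a\<in>?J. joint_prob N \<rho> x a * (\<Sum>y\<in>UNIV. p x a y * vi y))"
    unfolding trans_mat_def matrix_vector_mult_def
    by (simp add: sum_distrib_left sum_distrib_right mult.assoc sum.swap[where A=UNIV])
  then have "reward_vec N A r \<rho> i $ x + \<beta> * (trans_mat N A p \<rho> *v (\<chi> y. vi y)) $ x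
      = (\<Sum>a\<in>?J. F a)"
    unfolding reward_vec_def F_def by (simp add: sum_distrib_left sum.distrib algebra_simps)
  also have "\<dots> = (\<Sum>ai\<in>A i x. \<Sum>a\<in>{a\<in>?J. a i = ai}. F a)"
    by (rule sum.group[symmetric, OF finite_joint_actions[of N A x, OF fin]])
      (use fin i in \<open>auto simp: joint_actions_def PiE_iff\<close>)
  also have "\<dots> = (\<Sum>ai\<in>A i x. \<rho> i x ai * Q_val N A p r \<beta> \<rho> i vi x ai)"
    unfolding Q_val_def sum_distrib_left F_def
    by (intro sum.cong refl) (auto simp: joint_prob_split[OF i])
  finally show ?thesis .
qed

lemma discounted_resolvent_bellman_err:
  fixes A :: "nat \<Rightarrow> 's::finite \<Rightarrow> 'a set"
  assumes fin: "\<forall>j<N. finite (A j x)" and i: "i < N"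
    and sum_one: "(\<Sum>ai\<in>A i x. \<rho> i x ai) = 1"
  shows "((mat 1 - \<beta> *\<^sub>R trans_mat N A p \<rho>) *v (\<chi> y. vi y)) $ x
       = reward_vec N A r \<rho> i $ x - (\<Sum>ai\<in>A i x. \<rho> i x ai * bellman_err N A p r \<beta> \<rho> i vi x ai)"
proof -
  have "(\<Sum>ai\<in>A i x. \<rho> i x ai * bellman_err N A p r \<beta> \<rho> i vi x ai)
      = (\<Sum>ai\<in>A i x. \<rho> i x ai * Q_val N A p r \<beta> \<rho> i vi x ai) - vi x"
    using sum_one
    by (simp add: bellman_err_def right_diff_distrib sum_subtractf sum_distrib_right[symmetric])
  then show ?thesis
    using reward_plus_discounted_expectation[of N A x, OF fin i, of r \<rho> \<beta> p vi]
    by (simp add: discounted_resolvent_apply)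
qed

lemma bellman_err_fun_upd_self:
  "bellman_err N A p r \<beta> (\<pi>(i := \<sigma>)) i = bellman_err N A p r \<beta> \<pi> i"
  unfolding bellman_err_def Q_val_def by (intro ext sum.cong prod.cong refl arg_cong2[where f="(-)"]) auto

lemma SG_SP_point_value:
  fixes A :: "nat \<Rightarrow> 's::finite \<Rightarrow> 'a set"
  assumes game: "is_game N A p \<beta>" and sp: "SG_SP_point N A p r \<beta> v \<pi>" and i: "i < N"
  shows "value_vec N A p r \<beta> \<pi> i = (\<chi> y. v i y)"
  unfolding value_vec_def
proof (rule discounted_value_eqI)
  have \<pi>: "is_strategy_profile N A \<pi>"
    using sp by (simp add: SG_SP_point_def OP_feasible_def)
  show "row_stochastic (trans_mat N A p \<pi>)"
    by (rule trans_mat_row_stochastic[OF game \<pi>])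
  show "0 \<le> \<beta>" "\<beta> < 1"
    using game by (auto simp: is_game_def)
  show "(mat 1 - \<beta> *\<^sub>R trans_mat N A p \<pi>) *v (\<chi> y. v i y) = reward_vec N A r \<pi> i"
  proof (subst vec_eq_iff, intro allI)
    fix x
    have fin: "\<forall>j<N. finite (A j x)"
      using game by (simp add: is_game_def)
    have sum_one: "(\<Sum>ai\<in>A i x. \<pi> i x ai) = 1"
      using \<pi> i by (simp add: is_strategy_profile_def is_stationary_strategy_def)
    have "(\<Sum>ai\<in>A i x. \<pi> i x ai * bellman_err N A p r \<beta> \<pi> i (v i) x ai) = 0"
      using sp i by (auto simp: SG_SP_point_def intro!: sum.neutral)
    then show "((mat 1 - \<beta> *\<^sub>R trans_mat N A p \<pi>) *v (\<chi> y. v i y)) $ x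
        = reward_vec N A r \<pi> i $ x"
      using discounted_resolvent_bellman_err[where A=A and \<rho>=\<pi> and vi="v i" and r=r, OF fin i sum_one]
      by simp
  qed
qed

lemma SG_SP_point_deviation_value_le:
  fixes A :: "nat \<Rightarrow> 's::finite \<Rightarrow> 'a set"
  assumes game: "is_game N A p \<beta>" and sp: "SG_SP_point N A p r \<beta> v \<pi>" and i: "i < N"
    and \<sigma>: "is_stationary_strategy A i \<sigma>"
  shows "value_vec N A p r \<beta> (\<pi>(i := \<sigma>)) i $ x \<le> v i x"
proof -
  define \<rho> where "\<rho> = \<pi>(i := \<sigma>)"
  have \<rho>: "is_strategy_profile N A \<rho>"
    using sp \<sigma> by (auto simp: \<rho>_def SG_SP_point_def OP_feasible_def is_strategy_profile_def)
  have \<beta>: "0 \<le> \<beta>" "\<beta> < 1"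
    using game by (auto simp: is_game_def)
  have super: "reward_vec N A r \<rho> i $ z \<le> ((mat 1 - \<beta> *\<^sub>R trans_mat N A p \<rho>) *v (\<chi> y. v i y)) $ z"
    for z
  proof -
    have "0 \<le> \<sigma> z ai" "bellman_err N A p r \<beta> \<pi> i (v i) z ai \<le> 0" if "ai \<in> A i z" for ai
      using \<sigma> sp i that by (auto simp: is_stationary_strategy_def SG_SP_point_def OP_feasible_def)
    then have "(\<Sum>ai\<in>A i z. \<rho> i z ai * bellman_err N A p r \<beta> \<rho> i (v i) z ai) \<le> 0"
      by (auto simp: \<rho>_def bellman_err_fun_upd_self intro!: sum_nonpos mult_nonneg_nonpos)
    moreover have fin: "\<forall>j<N. finite (A j z)"
      using game by (simp add: is_game_def)
    moreover have sum_one: "(\<Sum>ai\<in>A i z. \<rho> i z ai) = 1"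
      using \<sigma> by (simp add: \<rho>_def is_stationary_strategy_def)
    ultimately show ?thesis
      using discounted_resolvent_bellman_err[where A=A and \<rho>=\<rho> and vi="v i" and r=r, OF fin i sum_one]
      by simp
  qed
  show ?thesis
    using discounted_value_le[OF trans_mat_row_stochastic[OF game \<rho>] \<beta> super]
    by (simp add: value_vec_def \<rho>_def)
qed

theorem mainTheorem3:
  fixes N :: nat
    and A :: "nat \<Rightarrow> 's::finite \<Rightarrow> 'a set"
    and p :: "'s \<Rightarrow> (nat \<Rightarrow> 'a) \<Rightarrow> 's \<Rightarrow> real"
    and r :: "nat \<Rightarrow> 's \<Rightarrow> (nat \<Rightarrow> 'a) \<Rightarrow> real"
    and \<beta> :: real
    and v :: "nat \<Rightarrow> 's \<Rightarrow> real"
    and \<pi> :: "nat \<Rightarrow> 's \<Rightarrow> 'a \<Rightarrow> real"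
  assumes "is_game N A p \<beta>"
    and "SG_SP_point N A p r \<beta> v \<pi>"
  shows "is_Nash N A p r \<beta> \<pi>"
  unfolding is_Nash_def
proof (intro conjI allI impI)
  show "is_strategy_profile N A \<pi>"
    using assms(2) by (simp add: SG_SP_point_def OP_feasible_def)
  fix i \<sigma> x
  assume "i < N" and "is_stationary_strategy A i \<sigma>"
  then have "value_vec N A p r \<beta> (\<pi>(i := \<sigma>)) i $ x \<le> v i x"
    by (rule SG_SP_point_deviation_value_le[OF assms])
  also have "\<dots> = value_vec N A p r \<beta> \<pi> i $ x"
    using SG_SP_point_value[OF assms \<open>i < N\<close>] by simp
  finally show "value_vec N A p r \<beta> (\<pi>(i := \<sigma>)) i $ x \<le> value_vec N A p r \<beta> \<pi> i $ x" .
qed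

end
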